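(* Let $X$ be a Tychonoff space and let $cX$, $dX$ be compactifications of $X$ with $dX\preceq cX$, witnessed by a continuous map $\varphi: cX\to dX$. Suppose $X$ is an $F_{\sigma\delta}$ subset of $cX$. Then $X$ is an $F_{\sigma\delta}$ subset of $dX$ if and only if there exists a sequence $(H_n)_{n\in\mathbb N}$ of $F_\sigma$ subsets of $cX$ such that for every $F\in\mathcal F(cX,dX)$ there is $n\in\mathbb N$ with $X\subset H_n\subset cX\setminus F$.
   Context: A compactification of $X$ is a pair $(cX,\varphi_c)$ with $cX$ compact Hausdorff and $\varphi_c$ a homeomorphic embedding of $X$ onto a dense subspace of $cX$; we identify $X$ with its image in $cX$ (and in $dX$). We write $dX\preceq cX$ (i.e. $cX$ is larger than $dX$) if there exists a continuous map $\varphi:cX\to dX$ with $\varphi_d=\varphi\circ\varphi_c$. For such $\varphi$, $\mathcal F(cX,dX):=\{\varphi^{-1}(x) : x\in dX,\ \varphi^{-1}(x)\text{ is not a singleton}\}$. An $F_{\sigma\delta}$ set is a countable intersection of $F_\sigma$ sets. *)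

theory Defs
  imports "HOL-Analysis.Analysis"
begin

definition tychonoff_space :: "'a topology \<Rightarrow> bool" where
  "tychonoff_space X \<longleftrightarrow> completely_regular_space X \<and> Hausdorff_space X"

definition compactification :: "'a topology \<Rightarrow> 'b topology \<Rightarrow> ('a \<Rightarrow> 'b) \<Rightarrow> bool" where
  "compactification X cX e \<longleftrightarrow>
     compact_space cX \<and> Hausdorff_space cX \<and> embedding_map X cX e \<and>
     cX closure_of (e ` topspace X) = topspace cX"

definition fsigmadelta_in :: "'a topology \<Rightarrow> 'a set \<Rightarrow> bool" where
  "fsigmadelta_in X \<equiv> (countable intersection_of fsigma_in X) relative_to topspace X"

definition nonsingleton_fibres :: "'b topology \<Rightarrow> 'c topology \<Rightarrow> ('b \<Rightarrow> 'c) \<Rightarrow> 'b set set" where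
  "nonsingleton_fibres cX dX phi =
     {phi -` {x} \<inter> topspace cX | x. x \<in> topspace dX \<and> \<not> (\<exists>y. phi -` {x} \<inter> topspace cX = {y})}"

end

theory Submission
  imports Defs
begin

text \<open>Over a point of \<open>X\<close> the fibre of \<open>\<phi>\<close> is a singleton, so every fibre in
  \<open>\<F>(cX,dX)\<close> lies over a point of \<open>dX \<setminus> X\<close>. If \<open>X = \<Inter>\<^sub>n U\<^sub>n\<close> with \<open>U\<^sub>n\<close> an
  \<open>F\<^sub>\<sigma>\<close> set in \<open>dX\<close>, the preimages \<open>H\<^sub>n = \<phi>\<^sup>-\<^sup>1(U\<^sub>n)\<close> are \<open>F\<^sub>\<sigma>\<close> sets containing
  \<open>X\<close>, and each point outside \<open>X\<close> is missed by some \<open>U\<^sub>n\<close>, so its fibre is missed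
  by \<open>H\<^sub>n\<close>. Conversely, since \<open>cX\<close> is compact, \<open>\<phi>\<close> maps \<open>F\<^sub>\<sigma>\<close> sets to \<open>F\<^sub>\<sigma>\<close>
  sets, and \<open>X\<close> is the intersection of the images of the \<open>H\<^sub>n\<close> containing \<open>X\<close>
  and of the \<open>F\<^sub>\<sigma>\<close> sets whose intersection is \<open>X\<close> in \<open>cX\<close>: the former exclude
  the points with a big fibre, the latter those with a singleton fibre.\<close>

lemma fsigmadelta_in_iff_countable:
  "fsigmadelta_in X S \<longleftrightarrow>
     (\<exists>\<U>. countable \<U> \<and> (\<forall>u\<in>\<U>. fsigma_in X u) \<and> topspace X \<inter> \<Inter>\<U> = S)"
  unfolding fsigmadelta_in_def relative_to_def intersection_of_def by blast

lemma fsigmadelta_in_iff_sequence: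
  "fsigmadelta_in X S \<longleftrightarrow>
     (\<exists>U :: nat \<Rightarrow> 'a set. (\<forall>n. fsigma_in X (U n)) \<and> topspace X \<inter> (\<Inter>n. U n) = S)"
  unfolding fsigmadelta_in_iff_countable
proof
  assume "\<exists>\<U>. countable \<U> \<and> (\<forall>u\<in>\<U>. fsigma_in X u) \<and> topspace X \<inter> \<Inter>\<U> = S"
  then obtain \<U> where \<U>: "countable \<U>" "\<forall>u\<in>\<U>. fsigma_in X u" "topspace X \<inter> \<Inter>\<U> = S"
    by blast
  define U where "U = from_nat_into (insert (topspace X) \<U>)"
  have range_U: "range U = insert (topspace X) \<U>"
    unfolding U_def using \<U>(1) by (intro range_from_nat_into) auto
  then have "fsigma_in X (U n)" for n
    using \<U>(2) rangeI[of U n] by auto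
  moreover have "topspace X \<inter> (\<Inter>n. U n) = topspace X \<inter> \<Inter>\<U>"
    by (simp add: range_U Int_assoc[symmetric])
  ultimately have "(\<forall>n. fsigma_in X (U n)) \<and> topspace X \<inter> (\<Inter>n. U n) = S"
    using \<U>(3) by simp
  then show "\<exists>U :: nat \<Rightarrow> 'a set. (\<forall>n. fsigma_in X (U n)) \<and> topspace X \<inter> (\<Inter>n. U n) = S"
    by blast
next
  assume "\<exists>U :: nat \<Rightarrow> 'a set. (\<forall>n. fsigma_in X (U n)) \<and> topspace X \<inter> (\<Inter>n. U n) = S"
  then obtain U :: "nat \<Rightarrow> 'a set" where "\<And>n. fsigma_in X (U n)" "topspace X \<inter> (\<Inter>n. U n) = S"
    by blast
  then have "countable (range U) \<and> (\<forall>u\<in>range U. fsigma_in X u) \<and> topspace X \<inter> \<Inter>(range U) = S"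
    by simp
  then show "\<exists>\<U>. countable \<U> \<and> (\<forall>u\<in>\<U>. fsigma_in X u) \<and> topspace X \<inter> \<Inter>\<U> = S" ..
qed

lemma fsigma_in_continuous_map_preimage:
  assumes "continuous_map X Y f" "fsigma_in Y S"
  shows "fsigma_in X {x \<in> topspace X. f x \<in> S}"
proof -
  obtain \<C> where \<C>: "countable \<C>" "\<And>c. c \<in> \<C> \<Longrightarrow> closedin Y c" "\<Union>\<C> = S"
    using assms(2) unfolding fsigma_in_def union_of_def by blast
  have "{x \<in> topspace X. f x \<in> S} = (\<Union>c\<in>\<C>. {x \<in> topspace X. f x \<in> c})"
    using \<C>(3) by auto
  also have "fsigma_in X \<dots>"
    using \<C> assms(1)
    by (intro fsigma_in_Union) (auto intro: closed_imp_fsigma_in closedin_continuous_map_preimage)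
  finally show ?thesis .
qed

lemma fsigma_in_continuous_map_image:
  assumes "continuous_map X Y f" "compact_space X" "Hausdorff_space Y" "fsigma_in X S"
  shows "fsigma_in Y (f ` S)"
proof -
  obtain \<C> where \<C>: "countable \<C>" "\<And>c. c \<in> \<C> \<Longrightarrow> closedin X c" "\<Union>\<C> = S"
    using assms(4) unfolding fsigma_in_def union_of_def by blast
  have "closedin Y (f ` c)" if "c \<in> \<C>" for c
    using that \<C>(2) assms(1-3)
    by (meson closedin_compact_space compactin_imp_closedin image_compactin)
  then have "fsigma_in Y (\<Union>c\<in>\<C>. f ` c)"
    using \<C>(1) by (intro fsigma_in_Union) (auto intro: closed_imp_fsigma_in)
  then show ?thesis
    using \<C>(3) by (metis image_Union)
qed

lemma fsigmadelta_in_preimage_separates_fibres: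
  assumes "continuous_map Y Z f" "fsigmadelta_in Z B"
  obtains H :: "nat \<Rightarrow> 'a set"
  where "\<And>n. fsigma_in Y (H n)"
    and "\<And>z. z \<in> topspace Z - B \<Longrightarrow>
           \<exists>n. {y \<in> topspace Y. f y \<in> B} \<subseteq> H n \<and> H n \<inter> f -` {z} = {}"
proof -
  obtain U :: "nat \<Rightarrow> _" where U: "\<And>n. fsigma_in Z (U n)" "topspace Z \<inter> (\<Inter>n. U n) = B"
    using assms(2) unfolding fsigmadelta_in_iff_sequence by blast
  let ?H = "\<lambda>n. {y \<in> topspace Y. f y \<in> U n}"
  show thesis
  proof
    show "fsigma_in Y (?H n)" for n
      using fsigma_in_continuous_map_preimage[OF assms(1) U(1)] .
    fix z assume "z \<in> topspace Z - B"
    then have "z \<notin> (\<Inter>n. U n)"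
      using U(2) by auto
    then obtain n where n: "z \<notin> U n"
      by blast
    have "B \<subseteq> U n"
      using U(2) by auto
    then have "{y \<in> topspace Y. f y \<in> B} \<subseteq> ?H n"
      by auto
    moreover have "?H n \<inter> f -` {z} = {}"
      using n by auto
    ultimately show "\<exists>n. {y \<in> topspace Y. f y \<in> B} \<subseteq> ?H n \<and> ?H n \<inter> f -` {z} = {}"
      by blast
  qed
qed

lemma fsigmadelta_in_continuous_map_image:
  fixes Y :: "'a topology" and H :: "nat \<Rightarrow> 'a set"
  assumes f: "continuous_map Y Z f" and "compact_space Y" "Hausdorff_space Z"
    and A: "fsigmadelta_in Y A"
    and H: "\<And>n. fsigma_in Y (H n)"
    and H_separates: "\<And>F. F \<in> nonsingleton_fibres Y Z f \<Longrightarrow> \<exists>n. A \<subseteq> H n \<and> H n \<subseteq> topspace Y - F"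
  shows "fsigmadelta_in Z (f ` A)"
proof -
  have image_fsigma: "fsigma_in Z (f ` S)" if "fsigma_in Y S" for S
    using fsigma_in_continuous_map_image[OF f assms(2,3) that] .
  obtain V :: "nat \<Rightarrow> _" where V: "\<And>k. fsigma_in Y (V k)" "topspace Y \<inter> (\<Inter>k. V k) = A"
    using A unfolding fsigmadelta_in_iff_sequence by blast
  define \<U> where "\<U> = insert (f ` topspace Y) (range (\<lambda>k. f ` V k) \<union> (\<lambda>n. f ` H n) ` {n. A \<subseteq> H n})"
  have "countable \<U>"
    unfolding \<U>_def by (simp add: countableI_type)
  moreover have "\<forall>u\<in>\<U>. fsigma_in Z u"
    unfolding \<U>_def using V(1) H by (auto intro: image_fsigma)
  moreover have "topspace Z \<inter> \<Inter>\<U> = f ` A"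
  proof
    show "f ` A \<subseteq> topspace Z \<inter> \<Inter>\<U>"
      unfolding \<U>_def using V(2) f continuous_map_image_subset_topspace by blast
  next
    show "topspace Z \<inter> \<Inter>\<U> \<subseteq> f ` A"
    proof
      fix z assume z: "z \<in> topspace Z \<inter> \<Inter>\<U>"
      then obtain y where y: "y \<in> topspace Y" "f y = z"
        unfolding \<U>_def by blast
      let ?F = "f -` {z} \<inter> topspace Y"
      show "z \<in> f ` A"
      proof (cases "\<exists>y'. ?F = {y'}")
        case True
        then obtain y' where "?F = {y'}"
          by blast
        moreover have "y \<in> ?F"
          using y by simp
        ultimately have fibre: "?F = {y}"
          by auto
        have "y \<in> V k" for k
        proof -
          have "z \<in> f ` V k"
            using z unfolding \<U>_def by blast
          then obtain y' where "y' \<in> V k" "f y' = z"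
            by blast
          moreover have "y' \<in> topspace Y"
            using \<open>y' \<in> V k\<close> fsigma_in_subset[OF V(1)] by blast
          ultimately show ?thesis
            using fibre by auto
        qed
        then show ?thesis
          using V(2) y by blast
      next
        case False
        then have "?F \<in> nonsingleton_fibres Y Z f"
          using z unfolding nonsingleton_fibres_def by blast
        then obtain n where n: "A \<subseteq> H n" "H n \<subseteq> topspace Y - ?F"
          using H_separates by blast
        then have "z \<in> f ` H n"
          using z unfolding \<U>_def by blast
        with n(2) show ?thesis
          by blast
      qed
    qed
  qed
  ultimately show ?thesis
    unfolding fsigmadelta_in_iff_countable by blast
qed

lemma compactification_image_subset:
  "compactification X cX ec \<Longrightarrow> ec ` topspace X \<subseteq> topspace cX"
  unfolding compactification_def by (metis embedding_map_in_subtopology subtopology_topspace)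

text \<open>If \<open>y \<noteq> ec z\<close> lies over \<open>ed z\<close>, separate \<open>y\<close> from \<open>ec z\<close> by disjoint open sets
  \<open>V\<close> and \<open>U\<close>. Since \<open>ed\<close> is an embedding, \<open>ed(X \<inter> U) = X \<inter> W\<close> for an open \<open>W\<close> in \<open>dX\<close>.
  The neighbourhood \<open>V \<inter> \<phi>\<^sup>-\<^sup>1(W)\<close> of \<open>y\<close> meets the dense set \<open>X\<close> in a point,
  which then lies in \<open>U\<close>, a contradiction.\<close>

lemma compactification_fibre_singleton:
  assumes cc: "compactification X cX ec" and cd: "compactification X dX ed"
    and phi: "continuous_map cX dX phi"
    and e: "\<And>x. x \<in> topspace X \<Longrightarrow> ed x = phi (ec x)"
    and z: "z \<in> topspace X"
  shows "phi -` {ed z} \<inter> topspace cX = {ec z}"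
proof -
  have ecz: "ec z \<in> topspace cX"
    using compactification_image_subset[OF cc] z by blast
  have "y = ec z" if y: "y \<in> topspace cX" "phi y = ed z" for y
  proof (rule ccontr)
    assume "y \<noteq> ec z"
    moreover have "Hausdorff_space cX"
      using cc unfolding compactification_def by blast
    ultimately obtain U V where UV: "openin cX U" "openin cX V" "ec z \<in> U" "y \<in> V" "disjnt U V"
      using ecz y(1) unfolding Hausdorff_space_def by blast
    have "continuous_map X cX ec"
      using cc unfolding compactification_def
      by (meson continuous_map_into_fulltopology embedding_map_def homeomorphic_imp_continuous_map)
    then have "openin X {x \<in> topspace X. ec x \<in> U}"
      using UV(1) by (rule openin_continuous_map_preimage)
    moreover have hd: "homeomorphic_map X (subtopology dX (ed ` topspace X)) ed"
      using cd unfolding compactification_def embedding_map_def by blast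
    ultimately have "openin (subtopology dX (ed ` topspace X)) (ed ` {x \<in> topspace X. ec x \<in> U})"
      using homeomorphic_imp_open_map[OF hd] unfolding open_map_def by blast
    then obtain W where W: "openin dX W" "ed ` {x \<in> topspace X. ec x \<in> U} = W \<inter> ed ` topspace X"
      unfolding openin_subtopology by blast
    have "ed z \<in> W"
      using W(2) z UV(3) by blast
    define V' where "V' = {p \<in> topspace cX. phi p \<in> W} \<inter> V"
    have "openin cX V'"
      unfolding V'_def using openin_continuous_map_preimage[OF phi W(1)] UV(2) by (rule openin_Int)
    moreover have "y \<in> V'"
      unfolding V'_def using y \<open>ed z \<in> W\<close> UV(4) by simp
    moreover have "cX closure_of (ec ` topspace X) = topspace cX"
      using cc unfolding compactification_def by blast
    ultimately have "ec ` topspace X \<inter> V' \<noteq> {}"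
      by (auto simp only: dense_intersects_open)
    then obtain w where w: "w \<in> topspace X" "ec w \<in> V'"
      by blast
    then have "ed w \<in> ed ` {x \<in> topspace X. ec x \<in> U}"
      using W(2) e unfolding V'_def by auto
    then obtain w' where w': "w' \<in> topspace X" "ec w' \<in> U" "ed w = ed w'"
      by blast
    have "w = w'"
      using homeomorphic_imp_injective_map[OF hd] w(1) w'(1,3) unfolding inj_on_def by blast
    then have "ec w \<in> U \<inter> V"
      using w'(2) w(2) unfolding V'_def by blast
    with UV(5) show False
      unfolding disjnt_def by blast
  qed
  then show ?thesis
    using ecz e[OF z] by auto
qed

lemma nonsingleton_fibres_over_remainder:
  assumes "compactification X cX ec" "compactification X dX ed" "continuous_map cX dX phi"
    and "\<And>x. x \<in> topspace X \<Longrightarrow> ed x = phi (ec x)"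
    and "F \<in> nonsingleton_fibres cX dX phi"
  obtains z where "z \<in> topspace dX - ed ` topspace X" "F = phi -` {z} \<inter> topspace cX"
proof -
  obtain z where z: "z \<in> topspace dX" and F: "F = phi -` {z} \<inter> topspace cX"
    and big: "\<nexists>y. phi -` {z} \<inter> topspace cX = {y}"
    using assms(5) unfolding nonsingleton_fibres_def by blast
  have "z \<notin> ed ` topspace X"
  proof
    assume "z \<in> ed ` topspace X"
    then obtain x where "x \<in> topspace X" "z = ed x"
      by blast
    then have "phi -` {z} \<inter> topspace cX = {ec x}"
      using compactification_fibre_singleton[OF assms(1-4)] by simp
    with big show False
      by blast
  qed
  with z F show thesis
    using that by blast
qed

text \<open>The Tychonoff hypothesis only guarantees that compactifications exist;
  the proof does not use it.\<close>

theorem proposition3p2: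
  fixes X :: "'a topology" and cX :: "'b topology" and dX :: "'c topology"
    and ec :: "'a \<Rightarrow> 'b" and ed :: "'a \<Rightarrow> 'c" and phi :: "'b \<Rightarrow> 'c"
  assumes "tychonoff_space X"
    and "compactification X cX ec"
    and "compactification X dX ed"
    and "continuous_map cX dX phi"
    and "\<And>x. x \<in> topspace X \<Longrightarrow> ed x = phi (ec x)"
    and "fsigmadelta_in cX (ec ` topspace X)"
  shows "fsigmadelta_in dX (ed ` topspace X) \<longleftrightarrow>
    (\<exists>H :: nat \<Rightarrow> 'b set. (\<forall>n. fsigma_in cX (H n)) \<and>
       (\<forall>F \<in> nonsingleton_fibres cX dX phi.
          \<exists>n. ec ` topspace X \<subseteq> H n \<and> H n \<subseteq> topspace cX - F))"
    (is "?lhs \<longleftrightarrow> (\<exists>H. ?separating H)")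
proof
  assume ?lhs
  obtain H :: "nat \<Rightarrow> 'b set" where H: "\<And>n. fsigma_in cX (H n)"
    and separates: "\<And>z. z \<in> topspace dX - ed ` topspace X \<Longrightarrow>
      \<exists>n. {y \<in> topspace cX. phi y \<in> ed ` topspace X} \<subseteq> H n \<and> H n \<inter> phi -` {z} = {}"
    using fsigmadelta_in_preimage_separates_fibres[OF assms(4) \<open>?lhs\<close>] by blast
  have X_in_preimage: "ec ` topspace X \<subseteq> {y \<in> topspace cX. phi y \<in> ed ` topspace X}"
    using compactification_image_subset[OF assms(2)] assms(5) by auto
  have "\<exists>n. ec ` topspace X \<subseteq> H n \<and> H n \<subseteq> topspace cX - F"
    if F_fibre: "F \<in> nonsingleton_fibres cX dX phi" for F
  proof -
    obtain z where z: "z \<in> topspace dX - ed ` topspace X" and F_eq: "F = phi -` {z} \<inter> topspace cX"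
      using nonsingleton_fibres_over_remainder[OF assms(2-5) F_fibre] .
    obtain n where n: "{y \<in> topspace cX. phi y \<in> ed ` topspace X} \<subseteq> H n"
      "H n \<inter> phi -` {z} = {}"
      using separates[OF z] by blast
    have "ec ` topspace X \<subseteq> H n"
      using X_in_preimage n(1) by (rule subset_trans)
    moreover have "H n \<subseteq> topspace cX - F"
      unfolding F_eq using n(2) fsigma_in_subset[OF H] by auto
    ultimately show ?thesis
      by blast
  qed
  with H show "\<exists>H. ?separating H"
    by blast
next
  assume "\<exists>H. ?separating H"
  then obtain H :: "nat \<Rightarrow> 'b set" where H: "\<And>n. fsigma_in cX (H n)"
    and H_separates: "\<And>F. F \<in> nonsingleton_fibres cX dX phi \<Longrightarrow>
      \<exists>n. ec ` topspace X \<subseteq> H n \<and> H n \<subseteq> topspace cX - F"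
    by blast
  have "compact_space cX" "Hausdorff_space dX"
    using assms(2,3) unfolding compactification_def by blast+
  then have "fsigmadelta_in dX (phi ` ec ` topspace X)"
    using fsigmadelta_in_continuous_map_image[OF assms(4) _ _ assms(6) H H_separates] by blast
  moreover have "phi ` ec ` topspace X = ed ` topspace X"
    using assms(5) by (simp add: image_image)
  ultimately show ?lhs
    by simp
qed

end
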